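(* Let $0<\alpha<1$, $m>1$, and let $a=\alpha/m$, $b=B=\alpha$, $A=1-\frac{m-1}{m}\alpha$, $F(z,s)=(m+1)\big(B(1-s)+(A+B)(z-s)\big)$ and $$K(z,u)=\frac{1}{\Gamma(1-\alpha)}\int_{\left(\frac{1-z}{1-u}\right)^{1/b}}^{1} F\big(z,\,1-s^{b}(1-u)\big)\,(1-s)^{-\alpha}\,s^{a+b}\,ds,\qquad 0\le u\le z<1 .$$ Then for every $X\in(0,1)$ there exist constants $0<K_-\le K_+$ (depending on $\alpha,m,X$) such that $$K_-\,(z-u)^{1-\alpha}\le K(z,u)\le K_+\,(z-u)^{1-\alpha}\qquad\text{for all } 0\le u\le z\le X .$$
   Context: This is the kernel of the Volterra equation $y(z)^{m+1}=\int_0^z K(z,u)y(u)\,du$ to which self-similar solutions $u(x,t)=t^{a}U(xt^{-b})$ of $\partial_t^\alpha u=(u^mu_x)_x$ with the Robin condition $u^mu_x(0,t)=-u(0,t)$ reduce. *)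

theory Defs
  imports "HOL-Analysis.Analysis"
begin

definition par_a :: "real \<Rightarrow> real \<Rightarrow> real" where
  "par_a \<alpha> m = \<alpha> / m"

definition par_b :: "real \<Rightarrow> real \<Rightarrow> real" where
  "par_b \<alpha> m = \<alpha>"

definition par_A :: "real \<Rightarrow> real \<Rightarrow> real" where
  "par_A \<alpha> m = 1 - (m - 1) / m * \<alpha>"

definition par_B :: "real \<Rightarrow> real \<Rightarrow> real" where
  "par_B \<alpha> m = \<alpha>"

definition kerF :: "real \<Rightarrow> real \<Rightarrow> real \<Rightarrow> real \<Rightarrow> real" where
  "kerF \<alpha> m z s = (m + 1) * (par_B \<alpha> m * (1 - s) + (par_A \<alpha> m + par_B \<alpha> m) * (z - s))"

text \<open>The Volterra kernel K(z,u), for 0 <= u <= z < 1. The integral is the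
  (Henstock-Kurzweil) integral over the interval from ((1-z)/(1-u))^(1/b) to 1;
  the integrand is absolutely integrable there.\<close>

definition kernelK :: "real \<Rightarrow> real \<Rightarrow> real \<Rightarrow> real \<Rightarrow> real" where
  "kernelK \<alpha> m z u =
     (1 / Gamma (1 - \<alpha>)) *
     integral {((1 - z) / (1 - u)) powr (1 / par_b \<alpha> m) .. 1}
       (\<lambda>s. kerF \<alpha> m z (1 - s powr (par_b \<alpha> m) * (1 - u)) * (1 - s) powr (- \<alpha>)
             * s powr (par_a \<alpha> m + par_b \<alpha> m))"

end

theory Submission
  imports Defs
begin

(* With s0 = ((1-z)/(1-u)) powr (1/\<alpha>) the lower limit of integration, the integrand of K(z,u)
   is w(s) (1-s) powr (-\<alpha>), where the weight w(s) = F(z, 1 - s powr b (1-u)) s powr (a+b) is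
   bounded between two positive constants on [s0, 1] as long as z \<le> X < 1. Hence K(z,u) is
   comparable to the integral of (1-s) powr (-\<alpha>) over [s0, 1], which is
   (1-s0) powr (1-\<alpha>) / (1-\<alpha>); and 1 - s0 lies between z - u and (z-u) / (\<alpha> (1-X)). *)

definition kernel_lower_limit :: "real \<Rightarrow> real \<Rightarrow> real \<Rightarrow> real \<Rightarrow> real" where
  "kernel_lower_limit \<alpha> m z u = ((1 - z) / (1 - u)) powr (1 / par_b \<alpha> m)"

definition kernel_weight :: "real \<Rightarrow> real \<Rightarrow> real \<Rightarrow> real \<Rightarrow> real \<Rightarrow> real" where
  "kernel_weight \<alpha> m z u s =
     kerF \<alpha> m z (1 - s powr par_b \<alpha> m * (1 - u)) * s powr (par_a \<alpha> m + par_b \<alpha> m)"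

definition kernel_weight_lower :: "real \<Rightarrow> real \<Rightarrow> real \<Rightarrow> real" where
  "kernel_weight_lower \<alpha> m X =
     (m + 1) * \<alpha> * (1 - X) * ((1 - X) powr (1 / \<alpha>)) powr (par_a \<alpha> m + par_b \<alpha> m)"

definition kernel_weight_upper :: "real \<Rightarrow> real \<Rightarrow> real" where
  "kernel_weight_upper \<alpha> m = (m + 1) * (2 * \<alpha> + par_A \<alpha> m)"

lemma kernelK_eq_integral_kernel_weight:
  "kernelK \<alpha> m z u = integral {kernel_lower_limit \<alpha> m z u..1}
     (\<lambda>s. kernel_weight \<alpha> m z u s * (1 - s) powr (- \<alpha>)) / Gamma (1 - \<alpha>)"
  unfolding kernelK_def kernel_lower_limit_def kernel_weight_def by (simp add: mult_ac)

lemma kernel_integrand_borel_measurable: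
  "(\<lambda>s. kernel_weight \<alpha> m z u s * (1 - s) powr (- \<alpha>)) \<in> borel_measurable (lebesgue_on S)"
proof -
  have "(\<lambda>s. kernel_weight \<alpha> m z u s * (1 - s) powr (- \<alpha>)) \<in> borel_measurable borel"
    unfolding kernel_weight_def kerF_def by measurable
  from measurable_compose[OF id_borel_measurable_lebesgue_on this] show ?thesis by simp
qed

lemma has_integral_one_minus_powr:
  fixes \<alpha> c :: real
  assumes "\<alpha> < 1" "c \<le> 1"
  shows "((\<lambda>s. (1 - s) powr (- \<alpha>)) has_integral (1 - c) powr (1 - \<alpha>) / (1 - \<alpha>)) {c..1}"
proof -
  define G where "G s = - ((1 - s) powr (1 - \<alpha>)) / (1 - \<alpha>)" for s :: real
  have "((\<lambda>s. (1 - s) powr (- \<alpha>)) has_integral (G 1 - G c)) {c..1}"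
  proof (rule fundamental_theorem_of_calculus_interior)
    show "continuous_on {c..1} G"
      using assms unfolding G_def by (intro continuous_intros continuous_on_powr') auto
    fix x assume x: "x \<in> {c<..<1}"
    have "(G has_real_derivative
        (- ((1 - \<alpha>) * (1 - x) powr (1 - \<alpha> - 1) * (-1)) / (1 - \<alpha>))) (at x)"
      using x assms unfolding G_def by (intro derivative_eq_intros) auto
    then show "(G has_vector_derivative (1 - x) powr (- \<alpha>)) (at x)"
      using assms by (simp add: has_real_derivative_iff_has_vector_derivative)
  qed (use assms in auto)
  then show ?thesis using assms by (simp add: G_def)
qed

lemma integral_between_multiples:
  fixes g k :: "real \<Rightarrow> real" and S :: "real set"
  assumes "S \<in> sets lebesgue" "g \<in> borel_measurable (lebesgue_on S)" "(k has_integral I) S"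
    and "0 \<le> c\<^sub>1" "\<And>s. s \<in> S \<Longrightarrow> 0 \<le> k s"
    and "\<And>s. s \<in> S \<Longrightarrow> c\<^sub>1 * k s \<le> g s" "\<And>s. s \<in> S \<Longrightarrow> g s \<le> c\<^sub>2 * k s"
  shows "c\<^sub>1 * I \<le> integral S g" "integral S g \<le> c\<^sub>2 * I"
proof -
  have c1k: "((\<lambda>s. c\<^sub>1 * k s) has_integral c\<^sub>1 * I) S" and c2k: "((\<lambda>s. c\<^sub>2 * k s) has_integral c\<^sub>2 * I) S"
    using assms(3) by (auto intro: has_integral_mult_right)
  have "g integrable_on S"
  proof (rule measurable_bounded_by_integrable_imp_integrable[OF assms(2) _ _ assms(1)])
    show "(\<lambda>s. c\<^sub>2 * k s) integrable_on S" using c2k by blast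
    show "norm (g s) \<le> c\<^sub>2 * k s" if "s \<in> S" for s
    proof -
      have "0 \<le> c\<^sub>1 * k s" using assms(4) assms(5)[OF that] by simp
      then show ?thesis using assms(6,7)[OF that] by simp
    qed
  qed
  then show "c\<^sub>1 * I \<le> integral S g" "integral S g \<le> c\<^sub>2 * I"
    using has_integral_le[OF c1k integrable_integral] has_integral_le[OF integrable_integral c2k] assms(6,7)
    by auto
qed

lemma par_A_pos:
  assumes "0 < \<alpha>" "\<alpha> < 1" "1 < m"
  shows "0 < par_A \<alpha> m"
proof -
  have "(m - 1) / m * \<alpha> < 1 * 1"
    using assms by (intro mult_strict_mono) auto
  then show ?thesis unfolding par_A_def by simp
qed

lemma kernel_lower_limit_bounds:
  fixes \<alpha> m X u z :: real
  assumes \<alpha>: "0 < \<alpha>" "\<alpha> \<le> 1" and X: "X < 1" and uz: "0 \<le> u" "u \<le> z" "z \<le> X"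
  defines "s\<^sub>0 \<equiv> kernel_lower_limit \<alpha> m z u"
  shows "(1 - X) powr (1 / \<alpha>) \<le> s\<^sub>0" "s\<^sub>0 \<le> 1" "s\<^sub>0 powr \<alpha> = (1 - z) / (1 - u)"
    and "z - u \<le> 1 - s\<^sub>0" "1 - s\<^sub>0 \<le> (z - u) / (\<alpha> * (1 - X))"
proof -
  define y where "y = (1 - z) / (1 - u)"
  have s\<^sub>0_eq: "s\<^sub>0 = y powr (1 / \<alpha>)"
    unfolding s\<^sub>0_def y_def kernel_lower_limit_def par_b_def ..
  have "X * u \<le> 1 * u" using uz X by (intro mult_right_mono) auto
  then have y_ge: "1 - X \<le> y" using uz X unfolding y_def by (simp add: field_simps)
  have y_le: "y \<le> 1" using uz X unfolding y_def by (simp add: field_simps)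
  have y_pos: "0 < y" using y_ge X by linarith
  show "(1 - X) powr (1 / \<alpha>) \<le> s\<^sub>0" unfolding s\<^sub>0_eq using y_ge X \<alpha> by (intro powr_mono2) auto
  show "s\<^sub>0 \<le> 1" unfolding s\<^sub>0_eq using y_le y_pos \<alpha> by (intro powr_le1) auto
  show "s\<^sub>0 powr \<alpha> = (1 - z) / (1 - u)" unfolding s\<^sub>0_eq y_def[symmetric] using \<alpha> y_pos
    by (simp add: powr_powr)
  have "s\<^sub>0 \<le> y" unfolding s\<^sub>0_eq using powr_le_one_le[OF y_pos y_le] \<alpha> by simp
  moreover have "z - u \<le> (z - u) / (1 - u)" using uz X by (simp add: le_divide_eq mult_left_le)
  moreover have "1 - y = (z - u) / (1 - u)" using uz X unfolding y_def by (simp add: field_simps)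
  ultimately show "z - u \<le> 1 - s\<^sub>0" by linarith
  txt \<open>From 1 + t \<le> exp t and ln x \<le> x - 1: 1 - y powr (1/\<alpha>) \<le> - ln y / \<alpha> \<le> (1/y - 1) / \<alpha>.\<close>
  have exp_bound: "1 + ln y / \<alpha> \<le> s\<^sub>0"
    unfolding s\<^sub>0_eq using y_pos exp_ge_add_one_self[of "ln y / \<alpha>"] by (simp add: powr_def)
  have "- ln y \<le> 1 / y - 1" using y_pos ln_le_minus_one[of "1 / y"] by (simp add: ln_div)
  moreover have "1 / y - 1 = (z - u) / (1 - z)" using uz X unfolding y_def by (simp add: field_simps)
  moreover have "(z - u) / (1 - z) \<le> (z - u) / (1 - X)" using uz X by (intro divide_left_mono) auto
  ultimately have "- ln y / \<alpha> \<le> (z - u) / (1 - X) / \<alpha>"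
    using \<alpha> by (intro divide_right_mono) auto
  with exp_bound show "1 - s\<^sub>0 \<le> (z - u) / (\<alpha> * (1 - X))" by (simp add: mult.commute)
qed

lemma kernel_weight_bounds:
  fixes \<alpha> m X u z s :: real
  assumes \<alpha>: "0 < \<alpha>" "\<alpha> < 1" and m: "1 < m" and X: "X < 1" and uz: "0 \<le> u" "u \<le> z" "z \<le> X"
    and s: "kernel_lower_limit \<alpha> m z u \<le> s" "s \<le> 1"
  shows "kernel_weight_lower \<alpha> m X \<le> kernel_weight \<alpha> m z u s"
    and "kernel_weight \<alpha> m z u s \<le> kernel_weight_upper \<alpha> m"
proof -
  note s\<^sub>0 = kernel_lower_limit_bounds[OF \<alpha>(1) less_imp_le[OF \<alpha>(2)] X uz, of m]
  define c where "c = par_a \<alpha> m + par_b \<alpha> m"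
  define F where "F = kerF \<alpha> m z (1 - s powr \<alpha> * (1 - u))"
  define w where "w = s powr \<alpha> * (1 - u)"
  have c_pos: "0 < c" unfolding c_def par_a_def par_b_def using \<alpha> m by (simp add: add_pos_pos)
  have s_ge: "(1 - X) powr (1 / \<alpha>) \<le> s" using s\<^sub>0(1) s by linarith
  have s_pos: "0 < s" using X less_le_trans[OF _ s_ge] by simp
  have "kernel_lower_limit \<alpha> m z u powr \<alpha> \<le> s powr \<alpha>"
    using s(1) \<alpha> by (intro powr_mono2) (auto simp: kernel_lower_limit_def)
  then have w_ge: "1 - z \<le> w" unfolding w_def using s\<^sub>0(3) uz X by (simp add: divide_le_eq)
  have "s powr \<alpha> \<le> 1" using s s_pos \<alpha> by (intro powr_le1) auto
  then have w_le: "w \<le> 1" unfolding w_def using uz X s_pos by (intro mult_le_one) auto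
  have A_pos: "0 < par_A \<alpha> m" using par_A_pos \<alpha> m .
  have F_eq: "F = (m + 1) * (\<alpha> * w + (par_A \<alpha> m + \<alpha>) * (z - 1 + w))"
    unfolding F_def kerF_def par_B_def w_def by simp
  have weight_eq: "kernel_weight \<alpha> m z u s = F * s powr c"
    unfolding kernel_weight_def F_def c_def par_b_def ..
  have "\<alpha> * (1 - X) \<le> \<alpha> * w" "0 \<le> (par_A \<alpha> m + \<alpha>) * (z - 1 + w)"
    using w_ge uz \<alpha> A_pos by auto
  then have F_ge: "(m + 1) * \<alpha> * (1 - X) \<le> F"
    unfolding F_eq using m by (simp add: mult.assoc mult_left_mono)
  have "\<alpha> * w \<le> \<alpha>" "(par_A \<alpha> m + \<alpha>) * (z - 1 + w) \<le> par_A \<alpha> m + \<alpha>"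
    using w_le uz X A_pos \<alpha> by (auto intro: mult_left_le)
  then have F_le: "F \<le> kernel_weight_upper \<alpha> m"
    unfolding F_eq kernel_weight_upper_def using m by (simp add: mult_left_mono)
  have F_nonneg: "0 \<le> (m + 1) * \<alpha> * (1 - X)" using m \<alpha> X by simp
  have "((1 - X) powr (1 / \<alpha>)) powr c \<le> s powr c" using s_ge X c_pos by (intro powr_mono2) auto
  then show "kernel_weight_lower \<alpha> m X \<le> kernel_weight \<alpha> m z u s"
    unfolding weight_eq kernel_weight_lower_def c_def[symmetric]
    using F_ge F_nonneg by (intro mult_mono) auto
  have "s powr c \<le> 1" using s_pos s c_pos by (intro powr_le1) auto
  then have "F * s powr c \<le> F" using F_ge F_nonneg by (intro mult_right_le_one_le) auto
  with F_le show "kernel_weight \<alpha> m z u s \<le> kernel_weight_upper \<alpha> m"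
    unfolding weight_eq by linarith
qed

lemma kernel_weight_lower_pos:
  assumes "0 < \<alpha>" "1 < m" "X < 1"
  shows "0 < kernel_weight_lower \<alpha> m X"
  using assms unfolding kernel_weight_lower_def by simp

lemma kernel_weight_upper_pos:
  assumes "0 < \<alpha>" "\<alpha> < 1" "1 < m"
  shows "0 < kernel_weight_upper \<alpha> m"
  using assms par_A_pos[OF assms] unfolding kernel_weight_upper_def by simp

lemma kernelK_bounds_by_lower_limit:
  fixes \<alpha> m X u z :: real
  assumes \<alpha>: "0 < \<alpha>" "\<alpha> < 1" and m: "1 < m" and X: "X < 1" and uz: "0 \<le> u" "u \<le> z" "z \<le> X"
  defines "s\<^sub>0 \<equiv> kernel_lower_limit \<alpha> m z u" and "N \<equiv> (1 - \<alpha>) * Gamma (1 - \<alpha>)"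
  shows "kernel_weight_lower \<alpha> m X / N * (1 - s\<^sub>0) powr (1 - \<alpha>) \<le> kernelK \<alpha> m z u"
    and "kernelK \<alpha> m z u \<le> kernel_weight_upper \<alpha> m / N * (1 - s\<^sub>0) powr (1 - \<alpha>)"
proof -
  define I where "I = integral {s\<^sub>0..1} (\<lambda>s. kernel_weight \<alpha> m z u s * (1 - s) powr (- \<alpha>))"
  have s\<^sub>0_le: "s\<^sub>0 \<le> 1"
    unfolding s\<^sub>0_def using kernel_lower_limit_bounds(2) \<alpha> X uz by simp
  have weight: "kernel_weight_lower \<alpha> m X \<le> kernel_weight \<alpha> m z u s"
    "kernel_weight \<alpha> m z u s \<le> kernel_weight_upper \<alpha> m" if "s \<in> {s\<^sub>0..1}" for s
    using kernel_weight_bounds[OF \<alpha> m X uz] that unfolding s\<^sub>0_def by auto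
  have bounds: "kernel_weight_lower \<alpha> m X * ((1 - s\<^sub>0) powr (1 - \<alpha>) / (1 - \<alpha>)) \<le> I"
    "I \<le> kernel_weight_upper \<alpha> m * ((1 - s\<^sub>0) powr (1 - \<alpha>) / (1 - \<alpha>))"
    unfolding I_def
    by (rule integral_between_multiples[OF _ kernel_integrand_borel_measurable
          has_integral_one_minus_powr[OF \<alpha>(2) s\<^sub>0_le]];
        use kernel_weight_lower_pos[OF \<alpha>(1) m X] weight in \<open>force intro: mult_right_mono\<close>)+
  have "kernelK \<alpha> m z u = I / Gamma (1 - \<alpha>)"
    unfolding kernelK_eq_integral_kernel_weight I_def s\<^sub>0_def ..
  moreover have "0 < Gamma (1 - \<alpha>)" using \<alpha> by simp
  ultimately show "kernel_weight_lower \<alpha> m X / N * (1 - s\<^sub>0) powr (1 - \<alpha>) \<le> kernelK \<alpha> m z u"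
    and "kernelK \<alpha> m z u \<le> kernel_weight_upper \<alpha> m / N * (1 - s\<^sub>0) powr (1 - \<alpha>)"
    using bounds \<alpha> unfolding N_def by (auto simp: field_simps)
qed

lemma kernelK_powr_bounds:
  fixes \<alpha> m X u z :: real
  assumes \<alpha>: "0 < \<alpha>" "\<alpha> < 1" and m: "1 < m" and X: "X < 1" and uz: "0 \<le> u" "u \<le> z" "z \<le> X"
  defines "N \<equiv> (1 - \<alpha>) * Gamma (1 - \<alpha>)"
  shows "kernel_weight_lower \<alpha> m X / N * (z - u) powr (1 - \<alpha>) \<le> kernelK \<alpha> m z u"
    and "kernelK \<alpha> m z u
           \<le> kernel_weight_upper \<alpha> m / N * (1 / (\<alpha> * (1 - X))) powr (1 - \<alpha>) * (z - u) powr (1 - \<alpha>)"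
proof -
  define s\<^sub>0 where "s\<^sub>0 = kernel_lower_limit \<alpha> m z u"
  note s\<^sub>0 = kernel_lower_limit_bounds[OF \<alpha>(1) less_imp_le[OF \<alpha>(2)] X uz, of m, folded s\<^sub>0_def]
  note K = kernelK_bounds_by_lower_limit[OF \<alpha> m X uz, folded s\<^sub>0_def N_def]
  have N_pos: "0 < N" unfolding N_def using \<alpha> by simp
  have "kernel_weight_lower \<alpha> m X / N * (z - u) powr (1 - \<alpha>)
      \<le> kernel_weight_lower \<alpha> m X / N * (1 - s\<^sub>0) powr (1 - \<alpha>)"
    using s\<^sub>0(4) uz \<alpha> N_pos kernel_weight_lower_pos[OF \<alpha>(1) m X]
    by (intro mult_left_mono powr_mono2) auto
  with K(1) show "kernel_weight_lower \<alpha> m X / N * (z - u) powr (1 - \<alpha>) \<le> kernelK \<alpha> m z u"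
    by linarith
  have "(1 - s\<^sub>0) powr (1 - \<alpha>) \<le> (1 / (\<alpha> * (1 - X)) * (z - u)) powr (1 - \<alpha>)"
    using s\<^sub>0(2,5) \<alpha> by (intro powr_mono2) auto
  also have "\<dots> = (1 / (\<alpha> * (1 - X))) powr (1 - \<alpha>) * (z - u) powr (1 - \<alpha>)"
    using uz \<alpha> X by (intro powr_mult)
  finally have "kernel_weight_upper \<alpha> m / N * (1 - s\<^sub>0) powr (1 - \<alpha>)
      \<le> kernel_weight_upper \<alpha> m / N * ((1 / (\<alpha> * (1 - X))) powr (1 - \<alpha>) * (z - u) powr (1 - \<alpha>))"
    using N_pos kernel_weight_upper_pos[OF \<alpha> m] by (intro mult_left_mono) auto
  with K(2) show "kernelK \<alpha> m z u
      \<le> kernel_weight_upper \<alpha> m / N * (1 / (\<alpha> * (1 - X))) powr (1 - \<alpha>) * (z - u) powr (1 - \<alpha>)"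
    by (simp only: mult.assoc)
qed

theorem mainTheorem2:
  fixes \<alpha> m :: real
  assumes "0 < \<alpha>" "\<alpha> < 1" "m > 1"
  shows "\<forall>X. 0 < X \<and> X < 1 \<longrightarrow>
           (\<exists>Km Kp. 0 < Km \<and> Km \<le> Kp \<and>
              (\<forall>u z. 0 \<le> u \<and> u \<le> z \<and> z \<le> X \<longrightarrow>
                 Km * (z - u) powr (1 - \<alpha>) \<le> kernelK \<alpha> m z u \<and>
                 kernelK \<alpha> m z u \<le> Kp * (z - u) powr (1 - \<alpha>)))"
proof (intro allI impI)
  fix X :: real assume X: "0 < X \<and> X < 1"
  define N where "N = (1 - \<alpha>) * Gamma (1 - \<alpha>)"
  define Km where "Km = kernel_weight_lower \<alpha> m X / N"
  define Kp where "Kp = max Km (kernel_weight_upper \<alpha> m / N * (1 / (\<alpha> * (1 - X))) powr (1 - \<alpha>))"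
  have "0 < Km"
    unfolding Km_def N_def using kernel_weight_lower_pos assms X by simp
  moreover have "Km \<le> Kp" unfolding Kp_def by simp
  moreover have "Km * (z - u) powr (1 - \<alpha>) \<le> kernelK \<alpha> m z u"
    "kernelK \<alpha> m z u \<le> Kp * (z - u) powr (1 - \<alpha>)" if "0 \<le> u" "u \<le> z" "z \<le> X" for u z
  proof -
    note K = kernelK_powr_bounds[OF assms conjunct2[OF X] that, folded N_def]
    show "Km * (z - u) powr (1 - \<alpha>) \<le> kernelK \<alpha> m z u" unfolding Km_def by (rule K(1))
    show "kernelK \<alpha> m z u \<le> Kp * (z - u) powr (1 - \<alpha>)"
      unfolding Kp_def by (intro order_trans[OF K(2)] mult_right_mono) auto
  qed
  ultimately show "\<exists>Km Kp. 0 < Km \<and> Km \<le> Kp \<and>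
      (\<forall>u z. 0 \<le> u \<and> u \<le> z \<and> z \<le> X \<longrightarrow>
         Km * (z - u) powr (1 - \<alpha>) \<le> kernelK \<alpha> m z u \<and> kernelK \<alpha> m z u \<le> Kp * (z - u) powr (1 - \<alpha>))"
    by blast
qed

end
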